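(* Let $K=2q$ with $q\ge 4$ and suppose $t=KM/N=3$. Then the D2D coded caching rate $R=N/M-1$ is achievable with subpacketization $$F=\frac{3K^2(K-2)}{8},$$ so that $F/F_{\rm JCM}=\frac{3}{4}\cdot\frac{K}{K-1}$.
   Context: D2D coded caching setting: there are $N\ge 1$ files $W_1,\dots,W_N$ and $K\ge 2$ users, each with a cache of size $M$ files, $0<M\le N$, and $t:=KM/N$ is assumed to be a positive integer. A D2D coded caching scheme with (uncoded placement and) subpacketization $F\in\mathbb{N}_+$ is defined as follows. Fix a packet size $b\ge 1$; each file is a sequence of $F$ packets $W_n=(W_n^{(1)},\dots,W_n^{(F)})$, $W_n^{(j)}\in\{0,1\}^b$. Placement: each user $k\in[K]$ stores the packets $\{W_n^{(j)}:(n,j)\in Z_k\}$ for a fixed index set $Z_k\subseteq[N]\times[F]$ with $|Z_k|\le MF$ (independent of demands and file contents). Delivery: for every demand vector $\mathbf d=(d_1,\dots,d_K)\in[N]^K$, each user $k$ broadcasts to all other users $\ell_k(\mathbf d)\in\mathbb{N}$ blocks in $\{0,1\}^b$, each a deterministic function of the packets stored by user $k$; it is required that for all file contents each user $k$ can recover all $F$ packets of $W_{d_k}$ from its stored packets and the blocks sent by the other users. The rate is $R=\max_{\mathbf d}\frac{1}{F}\sum_{k=1}^K\ell_k(\mathbf d)$ (transmitted bits normalized by the file size $Fb$). The rate $R$ is achievable with subpacketization $F$ if such a scheme with rate $R$ exists for every packet size $b\ge 1$. Define $F_{\rm JCM}:=t\binom{K}{t}$. *)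

theory Defs
  imports Complex_Main "HOL-Library.FuncSet"
begin

(* Conventions: files are indexed 0..N-1, packets 0..F-1, users 0..K-1.
   A file library is W :: nat \<times> nat \<Rightarrow> bool list, W (n,j) = packet j of file n. *)

definition demands :: "nat \<Rightarrow> nat \<Rightarrow> (nat \<Rightarrow> nat) set" where
  "demands N K = PiE {..<K} (\<lambda>_. {..<N})"

definition valid_library :: "nat \<Rightarrow> nat \<Rightarrow> nat \<Rightarrow> (nat \<times> nat \<Rightarrow> bool list) \<Rightarrow> bool" where
  "valid_library N F b W \<longleftrightarrow> (\<forall>n<N. \<forall>j<F. length (W (n, j)) = b)"

(* the content of a cache: the packets indexed by Z, everything else hidden *)
definition mask :: "(nat \<times> nat) set \<Rightarrow> (nat \<times> nat \<Rightarrow> bool list) \<Rightarrow> (nat \<times> nat \<Rightarrow> bool list)" where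
  "mask Z W = (\<lambda>p. if p \<in> Z then W p else [])"

(* A D2D coded caching scheme with uncoded placement, subpacketization F,
   packet size b and rate R. enc d k maps the cache content of user k to the
   list of l d k blocks broadcast by user k; dec d k maps the cache content of
   user k and the blocks sent by the other users to the packets of W_{d k}. *)
definition d2d_scheme :: "nat \<Rightarrow> nat \<Rightarrow> real \<Rightarrow> nat \<Rightarrow> nat \<Rightarrow> real \<Rightarrow> bool" where
  "d2d_scheme N K M F b R \<longleftrightarrow>
    (\<exists>(Z :: nat \<Rightarrow> (nat \<times> nat) set)
      (l :: (nat \<Rightarrow> nat) \<Rightarrow> nat \<Rightarrow> nat)
      (enc :: (nat \<Rightarrow> nat) \<Rightarrow> nat \<Rightarrow> (nat \<times> nat \<Rightarrow> bool list) \<Rightarrow> bool list list)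
      (dec :: (nat \<Rightarrow> nat) \<Rightarrow> nat \<Rightarrow> (nat \<times> nat \<Rightarrow> bool list) \<Rightarrow> (nat \<Rightarrow> bool list list) \<Rightarrow> nat \<Rightarrow> bool list).
      (\<forall>k<K. Z k \<subseteq> {..<N} \<times> {..<F} \<and> real (card (Z k)) \<le> M * real F) \<and>
      (\<forall>d \<in> demands N K. \<forall>W. valid_library N F b W \<longrightarrow>
         (\<forall>k<K. length (enc d k (mask (Z k) W)) = l d k \<and>
                (\<forall>x \<in> set (enc d k (mask (Z k) W)). length x = b)) \<and>
         (\<forall>k<K. \<forall>j<F.
            dec d k (mask (Z k) W)
               (\<lambda>i. if i < K \<and> i \<noteq> k then enc d i (mask (Z i) W) else [])
               j = W (d k, j))) \<and>
      R = Max ((\<lambda>d. real (\<Sum>k<K. l d k) / real F) ` demands N K))"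

definition d2d_achievable :: "nat \<Rightarrow> nat \<Rightarrow> real \<Rightarrow> nat \<Rightarrow> real \<Rightarrow> bool" where
  "d2d_achievable N K M F R \<longleftrightarrow> F \<ge> 1 \<and> (\<forall>b\<ge>1. d2d_scheme N K M F b R)"

definition F_JCM :: "nat \<Rightarrow> nat \<Rightarrow> nat" where
  "F_JCM K t = t * (K choose t)"

end

theory Submission
  imports Defs
begin

text \<open>The \<open>K = 2 q\<close> users form two sides of \<open>q\<close> users, user \<open>u\<close> having index \<open>u mod q\<close>;
  \<open>opposite q m i\<close> is the user of index \<open>i\<close> on the side not containing \<open>m\<close>. A user \<open>m\<close> and a
  pair \<open>I\<close> of indices span the triangle \<open>cached_by q (m, I)\<close> formed by \<open>m\<close> and the two users
  of the other side indexed by \<open>I\<close>. Each file is split into one subfile per such label, cached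
  exactly by its triangle, and each subfile into three packets, one per vertex. So
  \<open>F = 3 * 2q * (q choose 2) = 3 K\<^sup>2 (K - 2) / 8\<close> and every user stores the fraction \<open>3 / K\<close>
  of each file.

  User \<open>s\<close> multicasts XORs of three packets, either to a user of its own side and two users
  of the other side (\<open>(q - 1) * (q choose 2)\<close> times) or to three users of the other side
  (\<open>3 * (q choose 3)\<close> times). Each receiver's packet is cached by the sender and by the other
  two receivers, so it can be decoded, and every missing packet occurs in one such multicast.
  The \<open>K q (q - 1) (2q - 3) / 2\<close> multicasts, divided by \<open>F = 3 q\<^sup>2 (q - 1)\<close>, give the rate
  \<open>(2q - 3) / 3 = N / M - 1\<close>.\<close>

section \<open>Sums of blocks under XOR\<close>

definition xor_block :: "bool list \<Rightarrow> bool list \<Rightarrow> bool list" where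
  "xor_block a c = map2 (\<noteq>) a c"

lemma length_xor_block [simp]: "length (xor_block a c) = min (length a) (length c)"
  unfolding xor_block_def by simp

lemma xor_block_left_commute: "xor_block a (xor_block c e) = xor_block c (xor_block a e)"
  unfolding xor_block_def by (rule nth_equalityI) auto

lemma xor_block_cancel_right: "length a = length r \<Longrightarrow> xor_block (xor_block a r) r = a"
  unfolding xor_block_def by (rule nth_equalityI) auto

definition xor_blocks :: "nat \<Rightarrow> ('v \<Rightarrow> bool list) \<Rightarrow> 'v set \<Rightarrow> bool list" where
  "xor_blocks b f R = Finite_Set.fold (\<lambda>v. xor_block (f v)) (replicate b False) R"

lemma comp_fun_commute_xor_block: "comp_fun_commute_on UNIV (\<lambda>v. xor_block (f v))"
  by unfold_locales (auto simp: fun_eq_iff xor_block_left_commute)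

lemma xor_blocks_empty [simp]: "xor_blocks b f {} = replicate b False"
  by (simp add: xor_blocks_def)

lemma xor_blocks_insert [simp]:
  "finite R \<Longrightarrow> v \<notin> R \<Longrightarrow> xor_blocks b f (insert v R) = xor_block (f v) (xor_blocks b f R)"
  unfolding xor_blocks_def
  by (simp add: comp_fun_commute_on.fold_insert[OF comp_fun_commute_xor_block])

lemma xor_blocks_remove:
  "finite R \<Longrightarrow> v \<in> R \<Longrightarrow> xor_blocks b f R = xor_block (f v) (xor_blocks b f (R - {v}))"
  unfolding xor_blocks_def
  by (rule comp_fun_commute_on.fold_rec[OF comp_fun_commute_xor_block]) auto

lemma xor_blocks_cong:
  "finite R \<Longrightarrow> (\<And>v. v \<in> R \<Longrightarrow> f v = g v) \<Longrightarrow> xor_blocks b f R = xor_blocks b g R"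
  by (induction R rule: finite_induct) simp_all

lemma length_xor_blocks:
  "finite R \<Longrightarrow> (\<And>v. v \<in> R \<Longrightarrow> length (f v) = b) \<Longrightarrow> length (xor_blocks b f R) = b"
  by (induction R rule: finite_induct) simp_all

section \<open>Schemes built from XOR multicasts\<close>

lemma demand_lt: "d \<in> demands N K \<Longrightarrow> v < K \<Longrightarrow> d v < N"
  by (auto simp: demands_def)

text \<open>User \<open>s\<close> broadcasts one block for every \<open>\<tau> \<in> tx s\<close>: the XOR, over the receivers
  \<open>v \<in> rcv \<tau>\<close>, of packet \<open>pkt \<tau> v\<close> of the file demanded by \<open>v\<close>.\<close>

locale xor_delivery =
  fixes K :: nat and P :: "'p set" and cache :: "nat \<Rightarrow> 'p \<Rightarrow> bool"
    and tx :: "nat \<Rightarrow> 't set" and rcv :: "'t \<Rightarrow> nat set" and pkt :: "'t \<Rightarrow> nat \<Rightarrow> 'p"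
  assumes finite_tx: "s < K \<Longrightarrow> finite (tx s)"
    and finite_rcv: "s < K \<Longrightarrow> \<tau> \<in> tx s \<Longrightarrow> finite (rcv \<tau>)"
    and rcv_users: "s < K \<Longrightarrow> \<tau> \<in> tx s \<Longrightarrow> rcv \<tau> \<subseteq> {..<K}"
    and pkt_in_P: "s < K \<Longrightarrow> \<tau> \<in> tx s \<Longrightarrow> v \<in> rcv \<tau> \<Longrightarrow> pkt \<tau> v \<in> P"
    and sender_caches: "s < K \<Longrightarrow> \<tau> \<in> tx s \<Longrightarrow> v \<in> rcv \<tau> \<Longrightarrow> cache s (pkt \<tau> v)"
    and decodable: "k < K \<Longrightarrow> p \<in> P \<Longrightarrow> \<not> cache k p \<Longrightarrow>
      \<exists>s<K. s \<noteq> k \<and> (\<exists>\<tau>\<in>tx s. k \<in> rcv \<tau> \<and> pkt \<tau> k = p \<and> (\<forall>v\<in>rcv \<tau> - {k}. cache k (pkt \<tau> v)))"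

lemma (in xor_delivery) relabel:
  assumes \<phi>: "bij_betw \<phi> Q P"
  shows "xor_delivery K Q (\<lambda>k j. cache k (\<phi> j)) tx rcv (\<lambda>\<tau> v. inv_into Q \<phi> (pkt \<tau> v))"
proof -
  have inv: "inv_into Q \<phi> p \<in> Q" "\<phi> (inv_into Q \<phi> p) = p" if "p \<in> P" for p
    using that \<phi> by (auto simp: bij_betw_def inv_into_into f_inv_into_f)
  have inv_\<phi>: "inv_into Q \<phi> (\<phi> j) = j" if "j \<in> Q" for j
    using that \<phi> by (simp add: bij_betw_def)
  show ?thesis
  proof
    fix k j assume k: "k < K" and j: "j \<in> Q" and miss: "\<not> cache k (\<phi> j)"
    have "\<phi> j \<in> P" using j \<phi> by (auto simp: bij_betw_def)
    then obtain s \<tau> where s: "s < K" "s \<noteq> k" "\<tau> \<in> tx s" "k \<in> rcv \<tau>" "pkt \<tau> k = \<phi> j"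
        and rest: "\<forall>v\<in>rcv \<tau> - {k}. cache k (pkt \<tau> v)"
      using decodable[OF k _ miss] by blast
    moreover have "inv_into Q \<phi> (pkt \<tau> k) = j"
      using s(5) inv_\<phi>[OF j] by simp
    moreover have "cache k (\<phi> (inv_into Q \<phi> (pkt \<tau> v)))" if "v \<in> rcv \<tau> - {k}" for v
      using that rest inv(2)[OF pkt_in_P[OF s(1,3)]] by simp
    ultimately show "\<exists>s<K. s \<noteq> k \<and> (\<exists>\<tau>\<in>tx s. k \<in> rcv \<tau> \<and> inv_into Q \<phi> (pkt \<tau> k) = j \<and>
        (\<forall>v\<in>rcv \<tau> - {k}. cache k (\<phi> (inv_into Q \<phi> (pkt \<tau> v)))))"
      by blast
  qed (simp_all add: finite_tx finite_rcv rcv_users pkt_in_P sender_caches inv)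
qed

locale indexed_xor_delivery = xor_delivery K "{..<F}" cache tx rcv pkt
  for K F :: nat and cache :: "nat \<Rightarrow> nat \<Rightarrow> bool"
    and tx :: "nat \<Rightarrow> 't set" and rcv :: "'t \<Rightarrow> nat set" and pkt :: "'t \<Rightarrow> nat \<Rightarrow> nat"
begin

definition tx_list :: "nat \<Rightarrow> 't list" where
  "tx_list s = (SOME xs. distinct xs \<and> set xs = tx s)"

lemma tx_list:
  assumes "s < K" shows "distinct (tx_list s) \<and> set (tx_list s) = tx s"
proof -
  obtain xs where "set xs = tx s" "distinct xs"
    using finite_distinct_list[OF finite_tx[OF assms]] by blast
  then show ?thesis unfolding tx_list_def by (metis (mono_tags, lifting) someI)
qed

lemma length_tx_list: "s < K \<Longrightarrow> length (tx_list s) = card (tx s)"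
  using tx_list distinct_card by fastforce

definition placement :: "nat \<Rightarrow> nat \<Rightarrow> (nat \<times> nat) set" where
  "placement N k = {..<N} \<times> {j. j < F \<and> cache k j}"

definition coded_block ::
    "nat \<Rightarrow> (nat \<Rightarrow> nat) \<Rightarrow> (nat \<times> nat \<Rightarrow> bool list) \<Rightarrow> 't \<Rightarrow> nat set \<Rightarrow> bool list" where
  "coded_block b d W \<tau> R = xor_blocks b (\<lambda>v. W (d v, pkt \<tau> v)) R"

definition encoder :: "nat \<Rightarrow> (nat \<Rightarrow> nat) \<Rightarrow> nat \<Rightarrow> (nat \<times> nat \<Rightarrow> bool list) \<Rightarrow> bool list list" where
  "encoder b d s C = map (\<lambda>\<tau>. coded_block b d C \<tau> (rcv \<tau>)) (tx_list s)"

definition decodes_from :: "nat \<Rightarrow> nat \<Rightarrow> nat \<times> nat \<Rightarrow> bool" where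
  "decodes_from k j = (\<lambda>(s, i). s < K \<and> s \<noteq> k \<and> i < length (tx_list s) \<and>
     k \<in> rcv (tx_list s ! i) \<and> pkt (tx_list s ! i) k = j \<and>
     (\<forall>v\<in>rcv (tx_list s ! i) - {k}. cache k (pkt (tx_list s ! i) v)))"

definition decoder ::
    "nat \<Rightarrow> (nat \<Rightarrow> nat) \<Rightarrow> nat \<Rightarrow> (nat \<times> nat \<Rightarrow> bool list) \<Rightarrow> (nat \<Rightarrow> bool list list) \<Rightarrow> nat \<Rightarrow> bool list"
  where
  "decoder b d k C rv j =
    (if cache k j then C (d k, j)
     else case SOME si. decodes_from k j si of (s, i) \<Rightarrow>
       xor_block (rv s ! i) (coded_block b d C (tx_list s ! i) (rcv (tx_list s ! i) - {k})))"

lemma card_placement: "card (placement N k) = N * card {j. j < F \<and> cache k j}"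
  by (simp add: placement_def card_cartesian_product)

lemma coded_block_mask:
  assumes "d \<in> demands N K" "s < K" "\<tau> \<in> tx s" "R \<subseteq> rcv \<tau>" "\<forall>v\<in>R. cache k (pkt \<tau> v)"
  shows "coded_block b d (mask (placement N k) W) \<tau> R = coded_block b d W \<tau> R"
  unfolding coded_block_def
proof (rule xor_blocks_cong)
  show "finite R" using assms finite_rcv finite_subset by blast
  fix v assume "v \<in> R"
  then have "v \<in> rcv \<tau>" using assms(4) by blast
  then have "d v < N" "pkt \<tau> v < F"
    using rcv_users[OF assms(2,3)] pkt_in_P[OF assms(2,3)] demand_lt[OF assms(1)] by auto
  with \<open>v \<in> R\<close> assms(5) have "(d v, pkt \<tau> v) \<in> placement N k"
    by (simp add: placement_def)
  then show "mask (placement N k) W (d v, pkt \<tau> v) = W (d v, pkt \<tau> v)"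
    by (simp add: mask_def)
qed

lemma length_coded_block:
  assumes "valid_library N F b W" "d \<in> demands N K" "s < K" "\<tau> \<in> tx s" "R \<subseteq> rcv \<tau>"
  shows "length (coded_block b d W \<tau> R) = b"
  unfolding coded_block_def
proof (rule length_xor_blocks)
  show "finite R" using assms finite_rcv finite_subset by blast
  fix v assume "v \<in> R"
  then have "v \<in> rcv \<tau>" using assms(5) by blast
  then have "d v < N" "pkt \<tau> v < F"
    using rcv_users[OF assms(3,4)] pkt_in_P[OF assms(3,4)] demand_lt[OF assms(2)] by auto
  with assms(1) show "length (W (d v, pkt \<tau> v)) = b"
    by (simp add: valid_library_def)
qed

lemma encoder_mask:
  assumes "d \<in> demands N K" "s < K"
  shows "encoder b d s (mask (placement N s) W) = map (\<lambda>\<tau>. coded_block b d W \<tau> (rcv \<tau>)) (tx_list s)"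
  unfolding encoder_def
proof (rule list.map_cong0)
  fix \<tau> assume "\<tau> \<in> set (tx_list s)"
  then have "\<tau> \<in> tx s" using tx_list assms(2) by blast
  then show "coded_block b d (mask (placement N s) W) \<tau> (rcv \<tau>) = coded_block b d W \<tau> (rcv \<tau>)"
    using assms sender_caches by (intro coded_block_mask) auto
qed

lemma encoder_nth:
  assumes "d \<in> demands N K" "s < K" "i < length (tx_list s)"
  shows "encoder b d s (mask (placement N s) W) ! i
           = coded_block b d W (tx_list s ! i) (rcv (tx_list s ! i))"
  using assms by (simp add: encoder_mask)

lemma coded_block_remove:
  assumes "s < K" "\<tau> \<in> tx s" "k \<in> rcv \<tau>"
  shows "coded_block b d W \<tau> (rcv \<tau>) = xor_block (W (d k, pkt \<tau> k)) (coded_block b d W \<tau> (rcv \<tau> - {k}))"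
  unfolding coded_block_def using finite_rcv[OF assms(1,2)] assms(3) by (rule xor_blocks_remove)

lemma decodes_from_some:
  assumes k: "k < K" and "j < F" and miss: "\<not> cache k j"
  shows "decodes_from k j (SOME si. decodes_from k j si)"
proof -
  obtain s \<tau> where "s < K" "s \<noteq> k" "\<tau> \<in> tx s" "k \<in> rcv \<tau>" "pkt \<tau> k = j"
      "\<forall>v\<in>rcv \<tau> - {k}. cache k (pkt \<tau> v)"
    using decodable[OF k _ miss] \<open>j < F\<close> by blast
  moreover obtain i where "i < length (tx_list s)" "\<tau> = tx_list s ! i"
    using tx_list \<open>s < K\<close> \<open>\<tau> \<in> tx s\<close> by (metis in_set_conv_nth)
  ultimately have "decodes_from k j (s, i)" by (auto simp: decodes_from_def)
  then show ?thesis by (rule someI)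
qed

lemma decoder_correct:
  assumes W: "valid_library N F b W" and d: "d \<in> demands N K" and k: "k < K" and j: "j < F"
  shows "decoder b d k (mask (placement N k) W)
           (\<lambda>i. if i < K \<and> i \<noteq> k then encoder b d i (mask (placement N i) W) else []) j = W (d k, j)"
proof (cases "cache k j")
  case True
  then have "(d k, j) \<in> placement N k"
    using demand_lt[OF d k] j by (simp add: placement_def)
  with True show ?thesis by (simp add: decoder_def mask_def)
next
  case False
  obtain s i where si: "(SOME si. decodes_from k j si) = (s, i)"
    by (metis surj_pair)
  define \<sigma> where "\<sigma> = tx_list s ! i"
  have src: "s < K" "s \<noteq> k" "i < length (tx_list s)" "k \<in> rcv \<sigma>" "pkt \<sigma> k = j"
      "\<forall>v\<in>rcv \<sigma> - {k}. cache k (pkt \<sigma> v)"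
    using decodes_from_some[OF k j False, unfolded si] unfolding decodes_from_def \<sigma>_def by auto
  have \<sigma>: "\<sigma> \<in> tx s" using nth_mem[OF src(3)] tx_list[OF src(1)] unfolding \<sigma>_def by blast
  define rest where "rest = coded_block b d W \<sigma> (rcv \<sigma> - {k})"
  have "length rest = b"
    unfolding rest_def by (rule length_coded_block[OF W d src(1) \<sigma>]) auto
  moreover have "length (W (d k, j)) = b"
    using W demand_lt[OF d k] j by (simp add: valid_library_def)
  ultimately have cancel: "xor_block (xor_block (W (d k, j)) rest) rest = W (d k, j)"
    by (simp add: xor_block_cancel_right)
  have "decoder b d k (mask (placement N k) W)
          (\<lambda>i. if i < K \<and> i \<noteq> k then encoder b d i (mask (placement N i) W) else []) j
        = xor_block (encoder b d s (mask (placement N s) W) ! i)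
            (coded_block b d (mask (placement N k) W) \<sigma> (rcv \<sigma> - {k}))"
    unfolding decoder_def if_not_P[OF False] si prod.case \<sigma>_def using src(1,2) by simp
  also have "\<dots> = xor_block (xor_block (W (d k, j)) rest) rest"
    using encoder_nth[OF d src(1,3)] coded_block_remove[OF src(1) \<sigma> src(4)]
      coded_block_mask[OF d src(1) \<sigma>, of "rcv \<sigma> - {k}"] src(5,6)
    by (simp add: rest_def flip: \<sigma>_def)
  also have "\<dots> = W (d k, j)" by (rule cancel)
  finally show ?thesis .
qed

theorem d2d_scheme_indexed:
  assumes "N \<ge> 1" "F > 0"
    and memory: "\<And>k. k < K \<Longrightarrow> real N * real (card {j. j < F \<and> cache k j}) \<le> M * real F"
    and rate: "real (\<Sum>s<K. card (tx s)) = R * real F"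
  shows "d2d_scheme N K M F b R"
  unfolding d2d_scheme_def
proof (intro exI conjI allI impI ballI)
  fix k assume "k < K"
  then show "real (card (placement N k)) \<le> M * real F"
    using memory by (simp add: card_placement)
  show "placement N k \<subseteq> {..<N} \<times> {..<F}"
    by (auto simp: placement_def)
next
  fix d W k assume d: "d \<in> demands N K" and W: "valid_library N F b W" and k: "k < K"
  show "length (encoder b d k (mask (placement N k) W)) = card (tx k)"
    using k by (simp add: encoder_def length_tx_list)
  show "length x = b" if "x \<in> set (encoder b d k (mask (placement N k) W))" for x
    using that tx_list[OF k] length_coded_block[OF W d k]
    by (auto simp: encoder_mask[OF d k])
  show "decoder b d k (mask (placement N k) W)
      (\<lambda>i. if i < K \<and> i \<noteq> k then encoder b d i (mask (placement N i) W) else []) j = W (d k, j)"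
    if "j < F" for j
    by (rule decoder_correct[OF W d k that])
next
  have "demands N K \<noteq> {}"
    using \<open>N \<ge> 1\<close> by (auto simp: demands_def PiE_eq_empty_iff lessThan_empty_iff)
  then show "R = Max ((\<lambda>d. real (\<Sum>s<K. card (tx s)) / real F) ` demands N K)"
    using rate \<open>F > 0\<close> by (simp add: image_constant_conv)
qed

end

theorem (in xor_delivery) d2d_scheme:
  assumes "finite P" "card P = F" "N \<ge> 1" "F > 0"
    and memory: "\<And>k. k < K \<Longrightarrow> real N * real (card {p \<in> P. cache k p}) \<le> M * real F"
    and rate: "real (\<Sum>s<K. card (tx s)) = R * real F"
  shows "d2d_scheme N K M F b R"
proof -
  obtain \<phi> where \<phi>: "bij_betw \<phi> {..<F} P"
    using ex_bij_betw_nat_finite[OF \<open>finite P\<close>] \<open>card P = F\<close> by (auto simp: atLeast0LessThan)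
  interpret indexed: indexed_xor_delivery K F "\<lambda>k j. cache k (\<phi> j)" tx rcv
      "\<lambda>\<tau> v. inv_into {..<F} \<phi> (pkt \<tau> v)"
    using relabel[OF \<phi>] by (simp add: indexed_xor_delivery_def)
  have "card {j. j < F \<and> cache k (\<phi> j)} = card {p \<in> P. cache k p}" for k
  proof -
    have "bij_betw \<phi> {j. j < F \<and> cache k (\<phi> j)} {p \<in> P. cache k p}"
      using \<phi> by (auto simp: bij_betw_def inj_on_def image_iff)
    then show ?thesis by (rule bij_betw_same_card)
  qed
  then show ?thesis
    using indexed.d2d_scheme_indexed assms by simp
qed

section \<open>The scheme for \<open>K = 2 q\<close> and \<open>t = 3\<close>\<close>

definition opposite :: "nat \<Rightarrow> nat \<Rightarrow> nat \<Rightarrow> nat" where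
  "opposite q m i = (if m < q then q + i else i)"

definition index_subsets :: "nat \<Rightarrow> nat \<Rightarrow> nat set set" where
  "index_subsets q r = {I. I \<subseteq> {..<q} \<and> card I = r}"

fun cached_by :: "nat \<Rightarrow> nat \<times> nat set \<Rightarrow> nat set" where
  "cached_by q (m, I) = insert m (opposite q m ` I)"

definition packets :: "nat \<Rightarrow> ((nat \<times> nat set) \<times> nat) set" where
  "packets q = Sigma ({..<2 * q} \<times> index_subsets q 2) (cached_by q)"

definition caches :: "nat \<Rightarrow> nat \<Rightarrow> (nat \<times> nat set) \<times> nat \<Rightarrow> bool" where
  "caches q k p \<longleftrightarrow> k \<in> cached_by q (fst p)"

datatype transmission = Type1 nat nat "nat set" | Type2 nat nat "nat set"

definition same_side :: "nat \<Rightarrow> nat \<Rightarrow> nat set" where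
  "same_side q s = {a. a < 2 * q \<and> (a < q \<longleftrightarrow> s < q)}"

definition transmissions :: "nat \<Rightarrow> nat \<Rightarrow> transmission set" where
  "transmissions q s =
     (\<lambda>(a, J). Type1 s a J) ` ((same_side q s - {s}) \<times> index_subsets q 2) \<union>
     (\<lambda>(C, c). Type2 s c C) ` Sigma (index_subsets q 3) (\<lambda>C. C)"

fun receivers :: "nat \<Rightarrow> transmission \<Rightarrow> nat set" where
  "receivers q (Type1 s a J) = insert a (opposite q s ` J)"
| "receivers q (Type2 s c C) = opposite q s ` C"

text \<open>The packet for a receiver lies in the subfile whose triangle consists of the sender and
  the other two receivers.\<close>

fun delivered :: "nat \<Rightarrow> transmission \<Rightarrow> nat \<Rightarrow> (nat \<times> nat set) \<times> nat" where
  "delivered q (Type1 s a J) v =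
     (if v = a then ((s, J), s)
      else ((opposite q s (the_elem (J - {v mod q})), {s mod q, a mod q}), s))"
| "delivered q (Type2 s c C) v = ((s, C - {v mod q}), if c = v mod q then s else opposite q s c)"

lemma opposite_lt: "i < q \<Longrightarrow> opposite q m i < 2 * q"
  unfolding opposite_def by auto

lemma opposite_mod [simp]: "i < q \<Longrightarrow> opposite q m i mod q = i"
  unfolding opposite_def by auto

lemma opposite_side: "i < q \<Longrightarrow> opposite q m i < q \<longleftrightarrow> \<not> m < q"
  unfolding opposite_def by auto

lemma opposite_neq: "i < q \<Longrightarrow> opposite q m i \<noteq> m"
  unfolding opposite_def by auto

lemma opposite_inj: "opposite q m i = opposite q m j \<Longrightarrow> i = j"
  unfolding opposite_def by (auto split: if_splits)

lemma opposite_of_mod: "u < 2 * q \<Longrightarrow> (u < q \<longleftrightarrow> \<not> m < q) \<Longrightarrow> opposite q m (u mod q) = u"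
  unfolding opposite_def by (auto simp: le_mod_geq)

lemma opposite_opposite: "i < q \<Longrightarrow> m < 2 * q \<Longrightarrow> opposite q (opposite q m i) (m mod q) = m"
  by (rule opposite_of_mod) (auto simp: opposite_side)

lemma mod_inj_same_side:
  fixes u v q :: nat
  shows "u < 2 * q \<Longrightarrow> v < 2 * q \<Longrightarrow> (u < q \<longleftrightarrow> v < q) \<Longrightarrow> u mod q = v mod q \<Longrightarrow> u = v"
  by (auto simp: le_mod_geq)

lemma card_side: "card {u. u < 2 * q \<and> (u < q \<longleftrightarrow> P)} = q"
proof (cases P)
  case True
  then have "{u. u < 2 * q \<and> (u < q \<longleftrightarrow> P)} = {..<q}" by auto
  then show ?thesis by simp
next
  case False
  then have "{u. u < 2 * q \<and> (u < q \<longleftrightarrow> P)} = {q..<2 * q}" by auto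
  then show ?thesis by simp
qed

lemma finite_index_subsets: "finite (index_subsets q r)"
  unfolding index_subsets_def by (rule finite_subset[of _ "Pow {..<q}"]) auto

lemma card_index_subsets: "card (index_subsets q r) = q choose r"
  unfolding index_subsets_def using n_subsets[of "{..<q}" r] by simp

lemma index_subsetsD: "I \<in> index_subsets q r \<Longrightarrow> i \<in> I \<Longrightarrow> i < q"
  unfolding index_subsets_def by auto

lemma finite_index_subset: "I \<in> index_subsets q r \<Longrightarrow> finite I"
  unfolding index_subsets_def using finite_subset[OF _ finite_lessThan] by blast

lemma index_pairE:
  assumes "I \<in> index_subsets q 2" "i \<in> I"
  obtains i' where "I = {i, i'}" "i \<noteq> i'" "i' < q"
  using assms unfolding index_subsets_def by (auto simp: card_2_iff)

lemma card_cached_by: "I \<in> index_subsets q 2 \<Longrightarrow> card (cached_by q (m, I)) = 3"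
proof -
  assume I: "I \<in> index_subsets q 2"
  have "m \<notin> opposite q m ` I"
    using opposite_neq index_subsetsD[OF I] by (metis imageE)
  moreover have "card (opposite q m ` I) = 2"
  proof -
    have "inj_on (opposite q m) I"
      by (rule inj_onI) (rule opposite_inj)
    then show ?thesis using I by (simp add: card_image index_subsets_def)
  qed
  ultimately show ?thesis using finite_index_subset[OF I] by simp
qed

lemma finite_packets: "finite (packets q)"
  unfolding packets_def
proof (rule finite_SigmaI)
  show "finite ({..<2 * q} \<times> index_subsets q 2)" by (simp add: finite_index_subsets)
  fix T assume "T \<in> {..<2 * q} \<times> index_subsets q 2"
  then show "finite (cached_by q T)" by (auto dest: finite_index_subset)
qed

lemma card_packets: "card (packets q) = 3 * (2 * q * (q choose 2))"
proof -
  have "card (packets q) = (\<Sum>T\<in>{..<2 * q} \<times> index_subsets q 2. card (cached_by q T))"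
    unfolding packets_def
    by (rule card_SigmaI) (auto simp: finite_index_subsets finite_index_subset)
  also have "\<dots> = (\<Sum>T\<in>{..<2 * q} \<times> index_subsets q 2. 3)"
    by (rule sum.cong) (auto simp del: cached_by.simps simp: card_cached_by)
  finally show ?thesis by (simp add: card_cartesian_product card_index_subsets)
qed

lemma delivered_Type1:
  assumes s: "s < 2 * q" and a: "a < 2 * q" "a < q \<longleftrightarrow> s < q" "a \<noteq> s"
    and J: "J \<in> index_subsets q 2" and v: "v \<in> receivers q (Type1 s a J)"
  shows "delivered q (Type1 s a J) v \<in> packets q \<and> caches q s (delivered q (Type1 s a J) v)"
proof (cases "v = a")
  case True
  then show ?thesis using s J by (simp add: packets_def caches_def)
next
  case False
  then obtain j where j: "j \<in> J" "v = opposite q s j" using v by auto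
  obtain j' where j': "J = {j, j'}" "j \<noteq> j'" "j' < q" using index_pairE[OF J j(1)] .
  have "j < q" using index_subsetsD[OF J j(1)] .
  then have "the_elem (J - {v mod q}) = j'" using j j' by auto
  then have pkt: "delivered q (Type1 s a J) v = ((opposite q s j', {s mod q, a mod q}), s)"
    using False by simp
  have "s mod q \<noteq> a mod q" using mod_inj_same_side[OF s a(1)] a(2,3) by metis
  moreover have "s mod q < q" "a mod q < q" using s by auto
  ultimately have "{s mod q, a mod q} \<in> index_subsets q 2" by (simp add: index_subsets_def)
  moreover have "s \<in> cached_by q (opposite q s j', {s mod q, a mod q})"
    using opposite_opposite[OF j'(3) s] by auto
  ultimately show ?thesis using pkt opposite_lt[OF j'(3)] by (simp add: packets_def caches_def)
qed

lemma delivered_Type2: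
  assumes s: "s < 2 * q" and C: "C \<in> index_subsets q 3" "c \<in> C"
    and v: "v \<in> receivers q (Type2 s c C)"
  shows "delivered q (Type2 s c C) v \<in> packets q \<and> caches q s (delivered q (Type2 s c C) v)"
proof -
  obtain c' where c': "c' \<in> C" "v = opposite q s c'" using v by auto
  have "c' < q" using index_subsetsD[OF C(1) c'(1)] .
  then have pkt: "delivered q (Type2 s c C) v = ((s, C - {c'}), if c = c' then s else opposite q s c)"
    using c' by simp
  have "C - {c'} \<in> index_subsets q 2"
    using C c'(1) finite_index_subset[OF C(1)] by (auto simp: index_subsets_def)
  moreover have "(if c = c' then s else opposite q s c) \<in> cached_by q (s, C - {c'})"
    using C(2) by auto
  ultimately show ?thesis using pkt s by (simp add: packets_def caches_def)
qed

lemma transmissionsE: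
  assumes "\<tau> \<in> transmissions q s"
  obtains (Type1) a J where "\<tau> = Type1 s a J" "a < 2 * q" "a < q \<longleftrightarrow> s < q" "a \<noteq> s"
      "J \<in> index_subsets q 2"
    | (Type2) c C where "\<tau> = Type2 s c C" "C \<in> index_subsets q 3" "c \<in> C"
  using assms unfolding transmissions_def same_side_def by auto

lemma finite_receivers: "\<tau> \<in> transmissions q s \<Longrightarrow> finite (receivers q \<tau>)"
  by (erule transmissionsE) (auto dest: finite_index_subset)

lemma receivers_lt:
  assumes "\<tau> \<in> transmissions q s"
  shows "receivers q \<tau> \<subseteq> {..<2 * q}"
  using assms
proof (cases rule: transmissionsE)
  case (Type1 a J)
  have "opposite q s j < 2 * q" if "j \<in> J" for j
    using opposite_lt[OF index_subsetsD[OF Type1(5) that]] .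
  with Type1(1,2) show ?thesis by auto
next
  case (Type2 c C)
  have "opposite q s c' < 2 * q" if "c' \<in> C" for c'
    using opposite_lt[OF index_subsetsD[OF Type2(2) that]] .
  with Type2(1) show ?thesis by auto
qed

lemma delivered_packet:
  assumes "s < 2 * q" "\<tau> \<in> transmissions q s" "v \<in> receivers q \<tau>"
  shows "delivered q \<tau> v \<in> packets q \<and> caches q s (delivered q \<tau> v)"
  using assms(2)
proof (cases rule: transmissionsE)
  case (Type1 a J)
  then show ?thesis using delivered_Type1[OF assms(1)] assms(3) by simp
next
  case (Type2 c C)
  then show ?thesis using delivered_Type2[OF assms(1)] assms(3) by simp
qed

definition serves :: "nat \<Rightarrow> nat \<Rightarrow> (nat \<times> nat set) \<times> nat \<Rightarrow> transmission \<Rightarrow> bool" where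
  "serves q k p \<tau> \<longleftrightarrow> k \<in> receivers q \<tau> \<and> delivered q \<tau> k = p \<and>
     (\<forall>v\<in>receivers q \<tau> - {k}. caches q k (delivered q \<tau> v))"

lemma serves_apex_part:
  assumes k: "k < 2 * q" "k < q \<longleftrightarrow> m < q" "k \<noteq> m" and m: "m < 2 * q"
    and I: "I \<in> index_subsets q 2"
  shows "Type1 m k I \<in> transmissions q m" "serves q k ((m, I), m) (Type1 m k I)"
proof -
  show "Type1 m k I \<in> transmissions q m"
    using k I by (auto simp: transmissions_def same_side_def)
  have "caches q k (delivered q (Type1 m k I) v)" if v: "v \<in> receivers q (Type1 m k I) - {k}" for v
  proof -
    obtain i where i: "i \<in> I" "v = opposite q m i" using v by auto
    obtain i' where i': "I = {i, i'}" "i \<noteq> i'" "i' < q" using index_pairE[OF I i(1)] .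
    have "i < q" using index_subsetsD[OF I i(1)] .
    then have "delivered q (Type1 m k I) v = ((opposite q m i', {m mod q, k mod q}), m)"
      using v i i' by auto
    moreover have "opposite q (opposite q m i') (k mod q) = k"
      by (rule opposite_of_mod) (use k opposite_side[OF i'(3)] in auto)
    ultimately show ?thesis unfolding caches_def by force
  qed
  then show "serves q k ((m, I), m) (Type1 m k I)"
    by (simp add: serves_def)
qed

lemma serves_base_part:
  assumes k: "k < 2 * q" "k < q \<longleftrightarrow> m < q" "k \<noteq> m" and m: "m < 2 * q"
    and I: "I = {i, i'}" "i \<noteq> i'" "i < q" "i' < q"
  defines "\<tau> \<equiv> Type1 (opposite q m i) (opposite q m i') {m mod q, k mod q}"
  shows "\<tau> \<in> transmissions q (opposite q m i)" "serves q k ((m, I), opposite q m i) \<tau>"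
proof -
  define j a where "j = opposite q m i" and "a = opposite q m i'"
  have j: "j < 2 * q" "j < q \<longleftrightarrow> \<not> m < q" "j mod q = i"
    using I opposite_lt opposite_side unfolding j_def by auto
  have a: "a < 2 * q" "a < q \<longleftrightarrow> \<not> m < q" "a mod q = i'" "a \<noteq> j"
    using I opposite_lt opposite_side unfolding a_def j_def by (auto dest: opposite_inj)
  have mk: "m mod q \<noteq> k mod q" using mod_inj_same_side[OF m k(1)] k(2,3) by metis
  have "{m mod q, k mod q} \<in> index_subsets q 2"
    using mk k(1) m by (auto simp: index_subsets_def)
  then show "\<tau> \<in> transmissions q (opposite q m i)"
    using j a unfolding \<tau>_def transmissions_def same_side_def j_def a_def by auto
  have jm: "opposite q j (m mod q) = m" by (rule opposite_of_mod) (use m j in auto)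
  have jk: "opposite q j (k mod q) = k" by (rule opposite_of_mod) (use k j in auto)
  have receivers: "receivers q \<tau> = {a, m, k}"
    unfolding \<tau>_def using jm jk by (auto simp flip: j_def a_def)
  have ka: "k \<noteq> a" and ma: "m \<noteq> a" using a(2) k(2) by auto
  have "{m mod q, k mod q} - {k mod q} = {m mod q}" using mk by auto
  then have "delivered q \<tau> k = ((m, I), j)"
    using ka jm j(3) a(3) I(1) unfolding \<tau>_def by (simp flip: j_def a_def)
  moreover have "delivered q \<tau> a = ((j, {m mod q, k mod q}), j)"
    unfolding \<tau>_def by (simp flip: j_def a_def)
  moreover have "delivered q \<tau> m = ((k, {i, i'}), j)"
    using ma mk jk j(3) a(3) unfolding \<tau>_def by (auto simp: insert_Diff_if simp flip: j_def a_def)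
  ultimately show "serves q k ((m, I), opposite q m i) \<tau>"
    using receivers jk unfolding serves_def caches_def j_def by auto
qed

lemma serves_opposite_side:
  assumes k: "k < 2 * q" "k < q \<longleftrightarrow> \<not> m < q" and m: "m < 2 * q"
    and I: "I \<in> index_subsets q 2" "k mod q \<notin> I" and j: "j \<in> cached_by q (m, I)"
  defines "\<tau> \<equiv> Type2 m (if j = m then k mod q else j mod q) (insert (k mod q) I)"
  shows "\<tau> \<in> transmissions q m" "serves q k ((m, I), j) \<tau>"
proof -
  define C c where "C = insert (k mod q) I" and "c = (if j = m then k mod q else j mod q)"
  have kq: "k mod q < q" using k(1) by simp
  have "C \<in> index_subsets q 3"
    using I kq finite_index_subset[OF I(1)] unfolding C_def by (auto simp: index_subsets_def)
  moreover have "c \<in> C"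
    using j index_subsetsD[OF I(1)] unfolding c_def C_def by auto
  ultimately show "\<tau> \<in> transmissions q m"
    unfolding \<tau>_def transmissions_def by (auto simp flip: C_def c_def)
  have mk: "opposite q m (k mod q) = k" by (rule opposite_of_mod) (use k in auto)
  have CI: "C - {k mod q} = I" unfolding C_def using I(2) by auto
  have "delivered q \<tau> k = ((m, I), if c = k mod q then m else opposite q m c)"
    unfolding \<tau>_def using CI by (simp flip: C_def c_def)
  also have "\<dots> = ((m, I), j)"
  proof (cases "j = m")
    case False
    then obtain i where "i \<in> I" "j = opposite q m i" using j by auto
    with False I(2) index_subsetsD[OF I(1)] show ?thesis by (auto simp: c_def)
  qed (simp add: c_def)
  finally have "delivered q \<tau> k = ((m, I), j)" .
  moreover have "k \<in> receivers q \<tau>"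
    unfolding \<tau>_def using mk by force
  moreover have "caches q k (delivered q \<tau> v)" if v: "v \<in> receivers q \<tau> - {k}" for v
  proof -
    obtain c' where c': "c' \<in> C" "v = opposite q m c'" using v unfolding \<tau>_def C_def by auto
    have "c' < q" using c'(1) kq index_subsetsD[OF I(1)] unfolding C_def by auto
    then have "fst (delivered q \<tau> v) = (m, C - {c'})" unfolding \<tau>_def using c' by (simp flip: C_def)
    moreover have "c' \<noteq> k mod q" using c'(2) mk v by auto
    ultimately show ?thesis using mk unfolding caches_def C_def by force
  qed
  ultimately show "serves q k ((m, I), j) \<tau>" by (simp add: serves_def)
qed

lemma missing_packet_served:
  assumes k: "k < 2 * q" and p: "p \<in> packets q" and miss: "\<not> caches q k p"
  obtains s \<tau> where "s < 2 * q" "s \<noteq> k" "\<tau> \<in> transmissions q s" "serves q k p \<tau>"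
proof -
  obtain m I j where p_eq: "p = ((m, I), j)" and m: "m < 2 * q" and I: "I \<in> index_subsets q 2"
      and j: "j \<in> cached_by q (m, I)"
    using p unfolding packets_def by auto
  have k_out: "k \<notin> cached_by q (m, I)" using miss p_eq by (simp add: caches_def)
  show ?thesis
  proof (cases "k < q \<longleftrightarrow> m < q")
    case same_side: True
    have km: "k \<noteq> m" using k_out by auto
    show ?thesis
    proof (cases "j = m")
      case True
      then show ?thesis
        using that[of m] serves_apex_part[OF k(1) same_side km m I] m km p_eq by auto
    next
      case False
      then obtain i where i: "i \<in> I" "j = opposite q m i" using j by auto
      obtain i' where i': "I = {i, i'}" "i \<noteq> i'" "i' < q" using index_pairE[OF I i(1)] .
      have "i < q" using index_subsetsD[OF I i(1)] .
      moreover have "opposite q m i \<noteq> k"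
        using opposite_side[OF \<open>i < q\<close>, of m] same_side by auto
      ultimately show ?thesis
        using that[of "opposite q m i"] serves_base_part[OF k(1) same_side km m i'(1,2) _ i'(3)]
          opposite_lt p_eq i(2) by auto
    qed
  next
    case opposite_side: False
    have "k mod q \<notin> I"
    proof
      assume "k mod q \<in> I"
      moreover have "opposite q m (k mod q) = k" by (rule opposite_of_mod) (use k opposite_side in auto)
      ultimately show False using k_out by (metis cached_by.simps image_eqI insertCI)
    qed
    moreover have "m \<noteq> k" using opposite_side by auto
    ultimately show ?thesis
      using that[of m] serves_opposite_side[OF k(1) _ m I _ j] opposite_side m p_eq by auto
  qed
qed

lemma finite_transmissions: "finite (transmissions q s)"
proof -
  have "finite (Sigma (index_subsets q 3) (\<lambda>C. C))"
    by (rule finite_SigmaI) (auto simp: finite_index_subsets dest: finite_index_subset)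
  then show ?thesis
    unfolding transmissions_def same_side_def by (simp add: finite_index_subsets)
qed

lemma packets_xor_delivery:
  "xor_delivery (2 * q) (packets q) (caches q) (transmissions q) (receivers q) (delivered q)"
proof
  fix k p assume "k < 2 * q" "p \<in> packets q" "\<not> caches q k p"
  then obtain s \<tau> where "s < 2 * q" "s \<noteq> k" "\<tau> \<in> transmissions q s" "serves q k p \<tau>"
    by (rule missing_packet_served)
  then show "\<exists>s<2 * q. s \<noteq> k \<and> (\<exists>\<tau>\<in>transmissions q s. k \<in> receivers q \<tau> \<and> delivered q \<tau> k = p \<and>
      (\<forall>v\<in>receivers q \<tau> - {k}. caches q k (delivered q \<tau> v)))"
    unfolding serves_def by blast
qed (simp_all add: finite_transmissions finite_receivers receivers_lt delivered_packet)

lemma card_transmissions: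
  assumes "s < 2 * q"
  shows "card (transmissions q s) = (q - 1) * (q choose 2) + 3 * (q choose 3)"
proof -
  define T1 T2 where "T1 = (\<lambda>(a, J). Type1 s a J) ` ((same_side q s - {s}) \<times> index_subsets q 2)"
    and "T2 = (\<lambda>(C, c). Type2 s c C) ` Sigma (index_subsets q 3) (\<lambda>C. C)"
  have fin: "finite T1" "finite T2"
    using finite_transmissions[of q s] unfolding transmissions_def T1_def T2_def by auto
  have "card T1 = card ((same_side q s - {s}) \<times> index_subsets q 2)"
    unfolding T1_def by (rule card_image) (auto simp: inj_on_def)
  also have "\<dots> = (q - 1) * (q choose 2)"
    using card_side[of q "s < q"] assms
    by (simp add: card_cartesian_product card_index_subsets same_side_def)
  finally have card1: "card T1 = (q - 1) * (q choose 2)" .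
  have "card T2 = card (Sigma (index_subsets q 3) (\<lambda>C. C))"
    unfolding T2_def by (rule card_image) (auto simp: inj_on_def)
  also have "\<dots> = (\<Sum>C\<in>index_subsets q 3. card C)"
    by (rule card_SigmaI) (auto simp: finite_index_subsets dest: finite_index_subset)
  also have "\<dots> = (\<Sum>C\<in>index_subsets q 3. 3)"
    by (rule sum.cong) (auto simp: index_subsets_def)
  finally have card2: "card T2 = 3 * (q choose 3)" by (simp add: card_index_subsets)
  have "T1 \<inter> T2 = {}" unfolding T1_def T2_def by auto
  then show ?thesis
    using card_Un_disjoint[OF fin] card1 card2 by (simp add: transmissions_def T1_def T2_def)
qed

lemma card_cached_packets:
  assumes k: "k < 2 * q"
  shows "card {p \<in> packets q. caches q k p} \<le> 3 * ((q choose 2) + q * (q - 1))"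
proof -
  define labels where "labels = {T \<in> {..<2 * q} \<times> index_subsets q 2. k \<in> cached_by q T}"
  define opp where "opp = {m. m < 2 * q \<and> (m < q \<longleftrightarrow> \<not> k < q)}"
  have fin: "finite labels" unfolding labels_def by (simp add: finite_index_subsets)
  have "card {p \<in> packets q. caches q k p} = card (Sigma labels (cached_by q))"
    unfolding packets_def caches_def labels_def by (rule arg_cong[where f = card]) auto
  also have "\<dots> = (\<Sum>T\<in>labels. card (cached_by q T))"
    by (rule card_SigmaI[OF fin]) (auto simp: labels_def dest: finite_index_subset)
  also have "\<dots> = (\<Sum>T\<in>labels. 3)"
    by (rule sum.cong) (auto simp: labels_def card_cached_by simp del: cached_by.simps)
  also have "\<dots> = 3 * card labels" by simp
  finally have "card {p \<in> packets q. caches q k p} = 3 * card labels" .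
  moreover have "labels \<subseteq> {k} \<times> index_subsets q 2 \<union>
      (\<lambda>(m, i). (m, {k mod q, i})) ` (opp \<times> ({..<q} - {k mod q}))"
  proof
    fix T assume T: "T \<in> labels"
    then obtain m I where T_eq: "T = (m, I)" and m: "m < 2 * q" and I: "I \<in> index_subsets q 2"
        and kin: "k \<in> cached_by q (m, I)"
      unfolding labels_def by auto
    show "T \<in> {k} \<times> index_subsets q 2 \<union> (\<lambda>(m, i). (m, {k mod q, i})) ` (opp \<times> ({..<q} - {k mod q}))"
    proof (cases "k = m")
      case False
      then obtain i where i: "i \<in> I" "k = opposite q m i" using kin by auto
      have "i < q" using index_subsetsD[OF I i(1)] .
      obtain i' where i': "I = {i, i'}" "i \<noteq> i'" "i' < q" using index_pairE[OF I i(1)] .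
      have "m \<in> opp" unfolding opp_def using m i opposite_side[OF \<open>i < q\<close>, of m] by auto
      moreover have "k mod q = i" using i \<open>i < q\<close> by simp
      ultimately show ?thesis using T_eq i' by (auto simp: image_iff)
    qed (use T_eq I in auto)
  qed
  then have "card labels \<le> card ({k} \<times> index_subsets q 2 \<union>
      (\<lambda>(m, i). (m, {k mod q, i})) ` (opp \<times> ({..<q} - {k mod q})))"
    by (rule card_mono[rotated]) (simp add: finite_index_subsets opp_def)
  also have "\<dots> \<le> card ({k} \<times> index_subsets q 2) +
      card ((\<lambda>(m, i). (m, {k mod q, i})) ` (opp \<times> ({..<q} - {k mod q})))"
    by (rule card_Un_le)
  also have "\<dots> \<le> (q choose 2) + card (opp \<times> ({..<q} - {k mod q}))"
    using card_image_le[of "opp \<times> ({..<q} - {k mod q})" "\<lambda>(m, i). (m, {k mod q, i})"]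
    by (simp add: card_cartesian_product card_index_subsets opp_def)
  also have "card (opp \<times> ({..<q} - {k mod q})) = q * (q - 1)"
    using card_side[of q "\<not> k < q"] k by (simp add: card_cartesian_product opp_def)
  finally show ?thesis by simp
qed

lemma real_choose_two: "real (n choose 2) = real n * (real n - 1) / 2"
  by (induction n) (auto simp: numeral_2_eq_2 field_simps)

lemma real_choose_three: "real (n choose 3) = real n * (real n - 1) * (real n - 2) / 6"
proof (induction n)
  case (Suc n)
  have "Suc n choose 3 = (n choose 2) + (n choose 3)"
    by (simp add: numeral_3_eq_3 numeral_2_eq_2)
  then show ?case using Suc real_choose_two[of n] by (simp add: field_simps)
qed simp

lemma real_card_packets: "real (card (packets q)) = 3 * real q ^ 2 * (real q - 1)"
  by (simp add: card_packets real_choose_two power2_eq_square)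

lemma cached_fraction:
  assumes "k < 2 * q"
  shows "2 * real q * real (card {p \<in> packets q. caches q k p}) \<le> 3 * real (card (packets q))"
proof -
  have "real (card {p \<in> packets q. caches q k p}) \<le> real (3 * ((q choose 2) + q * (q - 1)))"
    using card_cached_packets[OF assms] by (simp only: of_nat_le_iff)
  also have "\<dots> = 3 * (real (q choose 2) + real q * (real q - 1))"
    using assms by (simp add: of_nat_diff)
  finally have "real (card {p \<in> packets q. caches q k p}) \<le> 3 * (real (q choose 2) + real q * (real q - 1))" .
  then have "2 * real q * real (card {p \<in> packets q. caches q k p})
      \<le> 2 * real q * (3 * (real (q choose 2) + real q * (real q - 1)))"
    by (rule mult_left_mono) simp
  also have "\<dots> = 3 * real (card (packets q))"
    by (simp add: real_card_packets real_choose_two power2_eq_square field_simps)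
  finally show ?thesis .
qed

lemma total_transmissions:
  assumes "q \<ge> 1"
  shows "3 * real (\<Sum>s<2 * q. card (transmissions q s)) = (2 * real q - 3) * real (card (packets q))"
proof -
  have "(\<Sum>s<2 * q. card (transmissions q s)) = (\<Sum>s<2 * q. (q - 1) * (q choose 2) + 3 * (q choose 3))"
    by (rule sum.cong) (simp_all add: card_transmissions)
  then show ?thesis
    using assms by (simp add: of_nat_diff real_card_packets real_choose_two real_choose_three
        power2_eq_square field_simps)
qed

theorem d2d_achievable_packets:
  assumes N: "N \<ge> 1" and q: "q \<ge> 2" and M: "M = 3 * real N / (2 * real q)"
  shows "d2d_achievable N (2 * q) M (card (packets q)) (2 * real q / 3 - 1)"
proof -
  have F: "card (packets q) > 0" using q by (simp add: card_packets)
  have "d2d_scheme N (2 * q) M (card (packets q)) b (2 * real q / 3 - 1)" for b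
  proof (rule xor_delivery.d2d_scheme[OF packets_xor_delivery finite_packets refl N F])
    fix k assume "k < 2 * q"
    have "real N * real (card {p \<in> packets q. caches q k p})
        = real N / (2 * real q) * (2 * real q * real (card {p \<in> packets q. caches q k p}))"
      using q by (simp add: field_simps)
    also have "\<dots> \<le> real N / (2 * real q) * (3 * real (card (packets q)))"
      by (rule mult_left_mono[OF cached_fraction[OF \<open>k < 2 * q\<close>]]) simp
    finally show "real N * real (card {p \<in> packets q. caches q k p}) \<le> M * real (card (packets q))"
      by (simp add: M)
  next
    show "real (\<Sum>s<2 * q. card (transmissions q s)) = (2 * real q / 3 - 1) * real (card (packets q))"
      using total_transmissions[of q] q by (simp add: field_simps)
  qed
  then show ?thesis using F by (simp add: d2d_achievable_def)
qed

theorem mainTheorem9: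
  fixes N K q :: nat and M :: real
  assumes "N \<ge> 1" and "K \<ge> 2" and "0 < M" and "M \<le> real N"
    and "K = 2 * q" and "q \<ge> 4"
    and "real K * M / real N = 3"
  shows "\<exists>F::nat. real F = 3 * real K ^ 2 * (real K - 2) / 8
           \<and> d2d_achievable N K M F (real N / M - 1)
           \<and> real F / real (F_JCM K 3) = 3 / 4 * (real K / (real K - 1))"
proof (intro exI conjI)
  have K: "real K = 2 * real q" and q: "real q \<ge> 4" using assms(5,6) by simp_all
  have M: "M = 3 * real N / (2 * real q)"
    using assms(1,7) K q by (simp add: field_simps)
  show "real (card (packets q)) = 3 * real K ^ 2 * (real K - 2) / 8"
    unfolding real_card_packets K by (simp add: field_simps power2_eq_square)
  have R: "real N / M - 1 = 2 * real q / 3 - 1"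
    using assms(1) q by (simp add: M field_simps)
  show "d2d_achievable N K M (card (packets q)) (real N / M - 1)"
    unfolding R assms(5) using d2d_achievable_packets[OF assms(1) _ M] assms(6) by simp
  have "real (F_JCM K 3) = 2 * real q * (2 * real q - 1) * (real q - 1)"
    unfolding F_JCM_def using real_choose_three[of K] K by (simp add: field_simps)
  then show "real (card (packets q)) / real (F_JCM K 3) = 3 / 4 * (real K / (real K - 1))"
    unfolding real_card_packets K using q by (simp add: divide_simps power2_eq_square)
qed

end
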